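(* The exponential $f(u)$ of the general elliptic formal group law $F_\mu$ is a Hurwitz series over $E=\mathbb{Z}[\mu_1,\mu_2,\mu_3,\mu_4,\mu_6]$, i.e. $f(u)=\sum_{k\ge0}\varphi_k\frac{u^k}{k!}$ with all $\varphi_k\in E$.
   Context: Let $\mu_1,\mu_2,\mu_3,\mu_4,\mu_6$ be independent indeterminates, $E=\mathbb{Z}[\mu_1,\dots,\mu_6]$. On the cubic $Y^2Z+\mu_1XYZ+\mu_3YZ^2=X^3+\mu_2X^2Z+\mu_4XZ^2+\mu_6Z^3$ with chord-tangent group law (neutral element $O=(0:1:0)$, three collinear points sum to zero), use Tate coordinates $t=-X/Y$, $s=-Z/Y$: the curve is $s=t^3+\mu_1ts+\mu_2t^2s+\mu_3s^2+\mu_4ts^2+\mu_6s^3$ with $s(t)$ the power series solution with $s(0)=0$. The general elliptic formal group law $F_\mu(t_1,t_2)\in E[[t_1,t_2]]$ gives the $t$-coordinate of $P_1+P_2$ for $P_i=(t_i,s(t_i))$. Its exponential is the unique $f\in(E\otimes\mathbb{Q})[[u]]$ with $f(0)=0$, $f'(0)=1$, $f(u+v)=F_\mu(f(u),f(v))$. *)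

theory Defs
  imports "HOL-Computational_Algebra.Polynomial" "HOL-Computational_Algebra.Formal_Power_Series"
          "HOL-Computational_Algebra.Fraction_Field"
begin

text \<open>The coefficient ring E = Z[mu1,mu2,mu3,mu4,mu6], realised as an iterated
  univariate polynomial ring over int (five independent indeterminates).
  K is its fraction field; E tensor Q embeds into K.\<close>

type_synonym E = "int poly poly poly poly poly"
type_synonym K = "E fract"

definition mu1 :: E where "mu1 = [:0, 1:]"
definition mu2 :: E where "mu2 = [:[:0, 1:]:]"
definition mu3 :: E where "mu3 = [:[:[:0, 1:]:]:]"
definition mu4 :: E where "mu4 = [:[:[:[:0, 1:]:]:]:]"
definition mu6 :: E where "mu6 = [:[:[:[:[:0, 1:]:]:]:]:]"

abbreviation m1 :: K where "m1 \<equiv> Fract mu1 1"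
abbreviation m2 :: K where "m2 \<equiv> Fract mu2 1"
abbreviation m3 :: K where "m3 \<equiv> Fract mu3 1"
abbreviation m4 :: K where "m4 \<equiv> Fract mu4 1"
abbreviation m6 :: K where "m6 \<equiv> Fract mu6 1"

definition tate_s :: "K fps" where
  "tate_s = (THE s. fps_nth s 0 = 0 \<and>
     s = fps_X ^ 3 + fps_const m1 * fps_X * s + fps_const m2 * fps_X ^ 2 * s
         + fps_const m3 * s ^ 2 + fps_const m4 * fps_X * s ^ 2 + fps_const m6 * s ^ 3)"

text \<open>Power series in two variables t1, t2 are represented as elements of
  K fps fps: the outer variable is t2, the inner variable is t1, i.e. the
  coefficient of t1^i t2^j of G is fps_nth (fps_nth G j) i.\<close>

definition T1 :: "K fps fps" where "T1 = fps_const fps_X"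
definition T2 :: "K fps fps" where "T2 = fps_X"

text \<open>Chord through P1 = (t1, s(t1)) and P2 = (t2, s(t2)): s = lambda t + nu with
  lambda = (s(t2) - s(t1)) / (t2 - t1) = sum_n s_n sum_{i+j=n-1} t1^i t2^j,
  nu = s(t1) - lambda t1.\<close>

definition chord_lambda :: "K fps fps" where
  "chord_lambda = Abs_fps (\<lambda>j. Abs_fps (\<lambda>i. fps_nth tate_s (i + j + 1)))"

definition chord_nu :: "K fps fps" where
  "chord_nu = fps_const tate_s - chord_lambda * T1"

text \<open>Substituting s = lambda t + nu into the cubic gives
  c3 t^3 + c2 t^2 + ... = 0 whose roots are t1, t2, t3 (third intersection point P3).\<close>

definition chord_c3 :: "K fps fps" where
  "chord_c3 = 1 + fps_const (fps_const m2) * chord_lambda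
     + fps_const (fps_const m4) * chord_lambda ^ 2 + fps_const (fps_const m6) * chord_lambda ^ 3"

definition chord_c2 :: "K fps fps" where
  "chord_c2 = fps_const (fps_const m1) * chord_lambda + fps_const (fps_const m2) * chord_nu
     + fps_const (fps_const m3) * chord_lambda ^ 2
     + 2 * fps_const (fps_const m4) * chord_lambda * chord_nu
     + 3 * fps_const (fps_const m6) * chord_lambda ^ 2 * chord_nu"

definition third_t :: "K fps fps" where
  "third_t = - T1 - T2 - chord_c2 * inverse chord_c3"

definition third_s :: "K fps fps" where
  "third_s = chord_lambda * third_t + chord_nu"

text \<open>P1 + P2 = -P3. For a point with Tate coordinates (t,s), its negative
  (X:Y:Z) -> (X : -Y - mu1 X - mu3 Z : Z) has t-coordinate t / (mu1 t + mu3 s - 1).\<close>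

definition elliptic_fgl :: "K fps fps" where
  "elliptic_fgl = third_t * inverse (fps_const (fps_const m1) * third_t
                                     + fps_const (fps_const m3) * third_s - 1)"

text \<open>For univariate series g, h with zero constant term, the two-variable series
  G(g(u), h(v)) (inner variable u, outer variable v).\<close>

definition bisubst :: "K fps fps \<Rightarrow> K fps \<Rightarrow> K fps \<Rightarrow> K fps fps" where
  "bisubst G g h = Abs_fps (\<lambda>j. Abs_fps (\<lambda>i.
      \<Sum>a\<le>i. \<Sum>b\<le>j. fps_nth (fps_nth G b) a * fps_nth (g ^ a) i * fps_nth (h ^ b) j))"

text \<open>The two-variable series f(u+v) (inner variable u, outer variable v).\<close>

definition add_subst :: "K fps \<Rightarrow> K fps fps" where
  "add_subst f = Abs_fps (\<lambda>j. Abs_fps (\<lambda>i. of_nat ((i + j) choose i) * fps_nth f (i + j)))"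

definition elliptic_exp :: "K fps" where
  "elliptic_exp = (THE f. fps_nth f 0 = 0 \<and> fps_nth f 1 = 1 \<and>
                     add_subst f = bisubst elliptic_fgl f f)"

definition hurwitz_over_E :: "K fps \<Rightarrow> bool" where
  "hurwitz_over_E f \<longleftrightarrow> (\<forall>k. \<exists>phi :: E. fps_nth f k = Fract phi 1 / of_nat (fact k))"

end

theory Submission
  imports Defs
begin

text \<open>The invariant differential of the cubic \<open>\<Phi>(t, s) = 0\<close> is \<open>dt / P\<close> with
  \<open>P = \<partial>\<Phi>/\<partial>s\<close>. The derivation \<open>P(t\<^sub>1) \<partial>\<^sub>1 - P(t\<^sub>2) \<partial>\<^sub>2\<close> moves the two points
  in opposite directions along this differential; computing with the chord through them and
  Vieta's formula for its third intersection shows that it kills \<open>F\<^sub>\<mu>(t\<^sub>1, t\<^sub>2)\<close>. Hence the exponential \<open>f\<close> is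
  the compositional inverse of \<open>\<integral> dt / P(t, s(t))\<close>, and \<open>f\<close> together with \<open>\<sigma> = s \<circ> f\<close> solves
  \<open>f' = P(f, \<sigma>)\<close>, \<open>\<sigma>' = Q(f, \<sigma>)\<close> with \<open>Q = -\<partial>\<Phi>/\<partial>t\<close>. Both right-hand sides are
  polynomials over \<open>E\<close>, and the Hurwitz coefficients \<open>k! a\<^sub>k\<close> of a product are integral
  combinations of those of the factors (Leibniz), so induction on \<open>k\<close> gives \<open>k! f\<^sub>k \<in> E\<close>.\<close>

unbundle fps_syntax

section \<open>Derivations\<close>

locale derivation =
  fixes D :: "'a::comm_ring_1 \<Rightarrow> 'a"
  assumes add [simp]: "D (x + y) = D x + D y"
    and mult [simp]: "D (x * y) = x * D y + D x * y"
    and one [simp]: "D 1 = 0"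
begin

lemma zero [simp]: "D 0 = 0"
  using add[of 0 0] by simp

lemma uminus [simp]: "D (- x) = - D x"
  using add[of x "- x"] by (simp add: eq_neg_iff_add_eq_0 add.commute)

lemma diff [simp]: "D (x - y) = D x - D y"
  using add[of x "- y"] by simp

lemma of_nat [simp]: "D (of_nat k) = 0"
  by (induction k) simp_all

lemma numeral [simp]: "D (numeral k) = 0"
  using of_nat[of "numeral k"] by simp

lemma power2 [simp]: "D (x ^ 2) = 2 * x * D x"
  by (simp add: power2_eq_square algebra_simps)

lemma power3 [simp]: "D (x ^ 3) = 3 * x ^ 2 * D x"
  by (simp add: power3_eq_cube power2_eq_square algebra_simps)

lemma right_inverse_const:
  assumes "D x = 0" and "x * y = 1"
  shows "D y = 0"
proof -
  have "x * D y = 0" using arg_cong[OF assms(2), of D] assms(1) by simp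
  hence "y * x * D y = 0" by (simp add: mult.assoc)
  thus ?thesis using assms(2) by (simp add: mult.commute)
qed

end

lemma derivation_diff_combination:
  assumes "derivation D\<^sub>1" and "derivation D\<^sub>2"
  shows "derivation (\<lambda>x. a * D\<^sub>1 x - b * D\<^sub>2 x)"
proof -
  interpret D\<^sub>1: derivation D\<^sub>1 by (fact assms(1))
  interpret D\<^sub>2: derivation D\<^sub>2 by (fact assms(2))
  show ?thesis by unfold_locales (simp_all add: algebra_simps)
qed

section \<open>The Tate cubic and its chords\<close>

text \<open>\<open>tate_P = \<partial>tate_Phi/\<partial>s\<close> and \<open>tate_Q = -\<partial>tate_Phi/\<partial>t\<close>.\<close>

definition tate_Phi :: "'a::comm_ring_1 \<Rightarrow> 'a \<Rightarrow> 'a \<Rightarrow> 'a \<Rightarrow> 'a \<Rightarrow> 'a \<Rightarrow> 'a \<Rightarrow> 'a" where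
  "tate_Phi a1 a2 a3 a4 a6 t s = s - t^3 - a1*t*s - a2*t^2*s - a3*s^2 - a4*t*s^2 - a6*s^3"

definition tate_P :: "'a::comm_ring_1 \<Rightarrow> 'a \<Rightarrow> 'a \<Rightarrow> 'a \<Rightarrow> 'a \<Rightarrow> 'a \<Rightarrow> 'a \<Rightarrow> 'a" where
  "tate_P a1 a2 a3 a4 a6 t s = 1 - a1*t - a2*t^2 - 2*a3*s - 2*a4*t*s - 3*a6*s^2"

definition tate_Q :: "'a::comm_ring_1 \<Rightarrow> 'a \<Rightarrow> 'a \<Rightarrow> 'a \<Rightarrow> 'a \<Rightarrow> 'a \<Rightarrow> 'a \<Rightarrow> 'a" where
  "tate_Q a1 a2 a3 a4 a6 t s = 3*t^2 + a1*s + 2*a2*t*s + a4*s^2"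

text \<open>Restricting the cubic to the line \<open>s = l t + n\<close> gives
  \<open>-(c\<^sub>3 t\<^sup>3 + c\<^sub>2 t\<^sup>2 + c\<^sub>1 t + c\<^sub>0)\<close>.\<close>

definition line_c3 :: "'a::comm_ring_1 \<Rightarrow> 'a \<Rightarrow> 'a \<Rightarrow> 'a \<Rightarrow> 'a" where
  "line_c3 a2 a4 a6 l = 1 + a2*l + a4*l^2 + a6*l^3"

definition line_c2 :: "'a::comm_ring_1 \<Rightarrow> 'a \<Rightarrow> 'a \<Rightarrow> 'a \<Rightarrow> 'a \<Rightarrow> 'a \<Rightarrow> 'a \<Rightarrow> 'a" where
  "line_c2 a1 a2 a3 a4 a6 l n = a1*l + a2*n + a3*l^2 + 2*a4*l*n + 3*a6*l^2*n"

definition line_c1 :: "'a::comm_ring_1 \<Rightarrow> 'a \<Rightarrow> 'a \<Rightarrow> 'a \<Rightarrow> 'a \<Rightarrow> 'a \<Rightarrow> 'a" where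
  "line_c1 a1 a3 a4 a6 l n = - l + a1*n + 2*a3*l*n + a4*n^2 + 3*a6*l*n^2"

definition line_c0 :: "'a::comm_ring_1 \<Rightarrow> 'a \<Rightarrow> 'a \<Rightarrow> 'a" where
  "line_c0 a3 a6 n = - n + a3*n^2 + a6*n^3"

lemma cubic_two_roots:
  fixes c3 c2 c1 c0 :: "'a::idom"
  assumes "c3*x^3 + c2*x^2 + c1*x + c0 = 0" and "c3*y^3 + c2*y^2 + c1*y + c0 = 0" and "x \<noteq> y"
  shows "c3*(x^2 + x*y + y^2) + c2*(x + y) + c1 = 0"
proof -
  have "(x - y) * (c3*(x^2 + x*y + y^2) + c2*(x + y) + c1)
        = (c3*x^3 + c2*x^2 + c1*x + c0) - (c3*y^3 + c2*y^2 + c1*y + c0)"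
    by (simp add: algebra_simps power2_eq_square power3_eq_cube)
  with assms show ?thesis by simp
qed

text \<open>The chord through \<open>O\<close> and \<open>(x, l x)\<close>: the negative of its third intersection point is
  \<open>(x, l x)\<close> again, negation acting on \<open>t\<close> by \<open>t \<mapsto> t / (a\<^sub>1 t + a\<^sub>3 s - 1)\<close>.\<close>

lemma tate_chord_through_origin:
  fixes x l :: "'a::idom"
  assumes on_curve: "tate_Phi a1 a2 a3 a4 a6 x (l*x) = 0" and "x \<noteq> 0"
    and inv3: "line_c3 a2 a4 a6 l * ic3 = 1"
    and t3: "t3 = - x - line_c2 a1 a2 a3 a4 a6 l 0 * ic3"
    and inv: "(a1 * t3 + a3 * (l * t3) - 1) * idd = 1"
  shows "t3 * idd = x"
proof -
  define c3 where "c3 = line_c3 a2 a4 a6 l"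
  define a where "a = a1 + a3*l"
  have "x * (l - x^2*c3 - x*a*l) = tate_Phi a1 a2 a3 a4 a6 x (l*x)"
    unfolding tate_Phi_def c3_def a_def line_c3_def
    by (simp add: algebra_simps power2_eq_square power3_eq_cube)
  hence "l - x^2*c3 - x*a*l = 0" using on_curve \<open>x \<noteq> 0\<close> by simp
  hence l_eq: "l = x^2*c3 + x*a*l" by (simp add: algebra_simps)
  have "c3 * t3 = - x*c3 - line_c2 a1 a2 a3 a4 a6 l 0 * (c3 * ic3)"
    unfolding t3 by (simp add: algebra_simps)
  also have "\<dots> = - x*c3 - a*l"
    unfolding c3_def inv3 by (simp add: a_def line_c2_def algebra_simps power2_eq_square)
  finally have c3_t3: "c3 * t3 = - x*c3 - a*l" .
  have "c3 * (t3 * (1 - x*a) + x) = a * (x^2*c3 - l + x*a*l)"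
    using c3_t3 by algebra
  also have "\<dots> = 0" by (subst l_eq) (simp add: algebra_simps)
  finally have "t3 * (1 - x*a) + x = 0" using inv3 by (auto simp: c3_def)
  hence "t3 = x * (a1 * t3 + a3 * (l * t3) - 1)" by (simp add: a_def algebra_simps)
  thus ?thesis using inv by (metis mult.assoc mult.right_neutral)
qed

locale tate_derivation = derivation D for D :: "'a::idom \<Rightarrow> 'a" +
  fixes a1 a2 a3 a4 a6 :: 'a
  assumes D_coeffs [simp]: "D a1 = 0" "D a2 = 0" "D a3 = 0" "D a4 = 0" "D a6 = 0"
begin

abbreviation "Phi \<equiv> tate_Phi a1 a2 a3 a4 a6"
abbreviation "P \<equiv> tate_P a1 a2 a3 a4 a6"
abbreviation "Q \<equiv> tate_Q a1 a2 a3 a4 a6"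

lemma D_Phi: "D (Phi t s) = P t s * D s - Q t s * D t"
  unfolding tate_Phi_def tate_P_def tate_Q_def by (simp add: algebra_simps)

lemma D_line_point:
  assumes "Phi t (l*t + n) = 0" and "P t (l*t + n) \<noteq> 0" and "D t = w * P t (l*t + n)"
  shows "D l * t + D n = w * (Q t (l*t + n) - l * P t (l*t + n))"
proof -
  have "0 = D (Phi t (l*t + n))" using assms(1) by simp
  also have "\<dots> = P t (l*t + n) * (D l * t + D n - w * (Q t (l*t + n) - l * P t (l*t + n)))"
    unfolding D_Phi using assms(3) by (simp add: algebra_simps)
  finally show ?thesis using assms(2) by simp
qed

end

locale tate_chord = tate_derivation +
  fixes t1 t2 l n :: 'a
  assumes on_curve: "Phi t1 (l*t1 + n) = 0" "Phi t2 (l*t2 + n) = 0"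
    and D_t1: "D t1 = P t1 (l*t1 + n)" and D_t2: "D t2 = - P t2 (l*t2 + n)"
    and P_nonzero: "P t1 (l*t1 + n) \<noteq> 0" "P t2 (l*t2 + n) \<noteq> 0"
    and distinct: "t1 \<noteq> t2"
begin

abbreviation "c3 \<equiv> line_c3 a2 a4 a6 l"
abbreviation "c2 \<equiv> line_c2 a1 a2 a3 a4 a6 l n"
abbreviation "c1 \<equiv> line_c1 a1 a3 a4 a6 l n"
abbreviation "c0 \<equiv> line_c0 a3 a6 n"

lemma Phi_on_line: "Phi t (l*t + n) = - (c3*t^3 + c2*t^2 + c1*t + c0)"
  unfolding tate_Phi_def line_c3_def line_c2_def line_c1_def line_c0_def
  by (simp add: algebra_simps power2_eq_square power3_eq_cube)

text \<open>Chain rule: this is \<open>-(d/dt) Phi(t, l t + n)\<close>.\<close>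

lemma Q_minus_P_on_line: "Q t (l*t + n) - l * P t (l*t + n) = 3*c3*t^2 + 2*c2*t + c1"
  unfolding tate_P_def tate_Q_def line_c3_def line_c2_def line_c1_def
  by (simp add: algebra_simps power2_eq_square power3_eq_cube)

lemma line_c1_eq: "c1 = - c3*(t1^2 + t1*t2 + t2^2) - c2*(t1 + t2)"
proof -
  have "c3*t^3 + c2*t^2 + c1*t + c0 = 0" if "Phi t (l*t + n) = 0" for t
    using that by (simp only: Phi_on_line neg_equal_0_iff_equal)
  from cubic_two_roots[OF this this distinct] on_curve show ?thesis
    by (simp add: eq_neg_iff_add_eq_0 algebra_simps)
qed

lemma D_slope: "D l = c3 * (t1 - t2)"
  and D_intercept: "D n = (t1 - t2) * (c3*(t1 + t2) + c2)"
proof -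
  have e1: "D l * t1 + D n = (t1 - t2) * (c3*(2*t1 + t2) + c2)"
    using D_line_point[OF on_curve(1) P_nonzero(1), of 1] D_t1
    unfolding Q_minus_P_on_line line_c1_eq by (simp add: algebra_simps power2_eq_square)
  have e2: "D l * t2 + D n = (t1 - t2) * (c3*(t1 + 2*t2) + c2)"
    using D_line_point[OF on_curve(2) P_nonzero(2), of "-1"] D_t2
    unfolding Q_minus_P_on_line line_c1_eq by (simp add: algebra_simps power2_eq_square)
  have "(t1 - t2) * (D l - c3 * (t1 - t2)) = 0"
    using e1 e2 by algebra
  thus slope: "D l = c3 * (t1 - t2)" using distinct by simp
  show "D n = (t1 - t2) * (c3*(t1 + t2) + c2)"
    using e1 slope by algebra
qed

lemma D_third_point:
  assumes inv: "c3 * ic3 = 1"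
  shows "D (- t1 - t2 - c2 * ic3) = 0" and "D (l * (- t1 - t2 - c2 * ic3) + n) = 0"
proof -
  define t3 where "t3 = - t1 - t2 - c2 * ic3"
  define M where "M = a2 + 2*a4*l + 3*a6*l^2"
  define B where "B = a1 + 2*a3*l + 2*a4*n + 6*a6*l*n"
  have c3_t3: "c3 * t3 = - c3*(t1 + t2) - c2"
    unfolding t3_def using inv by (simp add: algebra_simps)
  have D_c3: "D c3 = M * D l"
    unfolding line_c3_def M_def by (simp add: algebra_simps)
  have D_c2: "D c2 = B * D l + M * D n"
    unfolding line_c2_def M_def B_def by (simp add: algebra_simps)
  have "D (t1 + t2) = P t1 (l*t1 + n) - P t2 (l*t2 + n)"
    by (simp add: D_t1 D_t2)
  also have "\<dots> = - (t1 - t2) * (B + M*(t1 + t2))"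
    unfolding tate_P_def B_def M_def by (simp add: algebra_simps power2_eq_square)
  finally have D_sum: "D (t1 + t2) = - (t1 - t2) * (B + M*(t1 + t2))" .
  have "c3 * D t3 = D (c3 * t3) - D c3 * t3"
    by (simp add: algebra_simps)
  also have "\<dots> = - D c3 * (t1 + t2) - c3 * D (t1 + t2) - D c2 - D c3 * t3"
    unfolding c3_t3 by (simp add: algebra_simps)
  also have "\<dots> = - (t1 - t2) * M * (c3 * t3 + c3*(t1 + t2) + c2)"
    unfolding D_sum D_c3 D_c2 D_slope D_intercept by (simp add: algebra_simps)
  finally have "c3 * D t3 = 0" using c3_t3 by simp
  moreover have "c3 \<noteq> 0" using inv by auto
  ultimately have D_t3: "D t3 = 0" by simp
  thus "D (- t1 - t2 - c2 * ic3) = 0" by (simp add: t3_def)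
  have "D (l * t3 + n) = (t1 - t2) * (c3 * t3 + c3*(t1 + t2) + c2)"
    by (simp add: D_t3 D_slope D_intercept algebra_simps)
  thus "D (l * (- t1 - t2 - c2 * ic3) + n) = 0" using c3_t3 by (simp add: t3_def)
qed

end

lemma tate_P_compose:
  fixes c :: "'a::idom fps"
  assumes "c $ 0 = 0"
  shows "tate_P (fps_const a1) (fps_const a2) (fps_const a3) (fps_const a4) (fps_const a6) x y oo c
    = tate_P (fps_const a1) (fps_const a2) (fps_const a3) (fps_const a4) (fps_const a6) (x oo c) (y oo c)"
  unfolding tate_P_def
  by (simp add: fps_compose_sub_distrib fps_compose_add_distrib fps_compose_mult_distrib[OF assms]
      fps_compose_power[OF assms, symmetric] fps_numeral_fps_const)

lemma tate_Q_compose: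
  fixes c :: "'a::idom fps"
  assumes "c $ 0 = 0"
  shows "tate_Q (fps_const a1) (fps_const a2) (fps_const a3) (fps_const a4) (fps_const a6) x y oo c
    = tate_Q (fps_const a1) (fps_const a2) (fps_const a3) (fps_const a4) (fps_const a6) (x oo c) (y oo c)"
  unfolding tate_Q_def
  by (simp add: fps_compose_add_distrib fps_compose_mult_distrib[OF assms]
      fps_compose_power[OF assms, symmetric] fps_numeral_fps_const)

section \<open>Bivariate power series\<close>

lemma derivation_fps_deriv: "derivation (fps_deriv :: 'a::comm_ring_1 fps \<Rightarrow> 'a fps)"
  by unfold_locales simp_all

lemma one_minus_fps_const: "1 - fps_const (c::'a::comm_ring_1) = fps_const (1 - c)"
  by (simp flip: fps_const_1_eq_1 del: fps_const_1_eq_1)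

lemma fps_const_sum: "fps_const (sum f S) = (\<Sum>i\<in>S. fps_const (f i))"
  by (induction S rule: infinite_finite_induct) (simp_all flip: fps_const_add)

text \<open>\<open>fps_outer g\<close> is \<open>g(t\<^sub>2)\<close>.\<close>

definition fps_outer :: "'a::comm_ring_1 fps \<Rightarrow> 'a fps fps" where
  "fps_outer g = Abs_fps (\<lambda>j. fps_const (g $ j))"

lemma fps_outer_nth [simp]: "fps_outer g $ j = fps_const (g $ j)"
  by (simp add: fps_outer_def)

lemma fps_outer_diff [simp]: "fps_outer (f - g) = fps_outer f - fps_outer g"
  by (rule fps_ext) simp

lemma fps_outer_mult [simp]: "fps_outer (f * g) = fps_outer f * fps_outer g"
  by (rule fps_ext) (simp add: fps_mult_nth flip: fps_const_sum)

lemma fps_outer_zero [simp]: "fps_outer 0 = 0"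
  by (rule fps_ext) simp

lemma fps_outer_one [simp]: "fps_outer 1 = 1"
  by (rule fps_ext) simp

lemma fps_outer_const [simp]: "fps_outer (fps_const c) = fps_const (fps_const c)"
  by (rule fps_ext) simp

lemma fps_outer_X [simp]: "fps_outer fps_X = fps_X"
  by (rule fps_ext) simp

lemma fps_outer_power [simp]: "fps_outer (f ^ n) = fps_outer f ^ n"
  by (induction n) simp_all

lemma fps_outer_numeral [simp]: "fps_outer (numeral k) = numeral k"
  using fps_outer_const[of "numeral k"] by (simp only: fps_numeral_fps_const)

lemma fps_deriv_fps_outer: "fps_deriv (fps_outer g) = fps_outer (fps_deriv g)"
  by (rule fps_ext) (simp flip: fps_of_nat)

definition fps_deriv_inner :: "'a::comm_ring_1 fps fps \<Rightarrow> 'a fps fps" where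
  "fps_deriv_inner G = Abs_fps (\<lambda>j. fps_deriv (G $ j))"

lemma fps_deriv_inner_nth [simp]: "fps_deriv_inner G $ j = fps_deriv (G $ j)"
  by (simp add: fps_deriv_inner_def)

lemma fps_deriv_inner_X [simp]: "fps_deriv_inner fps_X = 0"
  by (rule fps_ext) (simp add: fps_X_nth)

lemma fps_deriv_inner_const [simp]: "fps_deriv_inner (fps_const g) = fps_const (fps_deriv g)"
  by (rule fps_ext) simp

lemma derivation_fps_deriv_inner: "derivation fps_deriv_inner"
proof
  fix x y :: "'a fps fps"
  show "fps_deriv_inner (x + y) = fps_deriv_inner x + fps_deriv_inner y"
    by (rule fps_ext) simp
  show "fps_deriv_inner (x * y) = x * fps_deriv_inner y + fps_deriv_inner x * y"
    by (rule fps_ext) (simp add: fps_mult_nth fps_deriv_sum sum.distrib)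
  show "fps_deriv_inner 1 = 0"
    by (rule fps_ext) (simp add: fps_one_nth)
qed

text \<open>\<open>bicompose G f\<close> is \<open>G(f(u), f(v))\<close>.\<close>

definition compose_inner :: "'a::idom fps fps \<Rightarrow> 'a fps \<Rightarrow> 'a fps fps" where
  "compose_inner G f = Abs_fps (\<lambda>j. G $ j oo f)"

definition bicompose :: "'a::idom fps fps \<Rightarrow> 'a fps \<Rightarrow> 'a fps fps" where
  "bicompose G f = compose_inner G f oo fps_outer f"

lemma compose_inner_nth [simp]: "compose_inner G f $ j = G $ j oo f"
  by (simp add: compose_inner_def)

lemma fps_outer_compose: "fps_outer g oo fps_outer f = fps_outer (g oo f)"
  by (rule fps_ext) (simp add: fps_compose_nth fps_const_sum flip: fps_outer_power)

context
  fixes f :: "'a::idom fps"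
  assumes f0: "f $ 0 = 0"
begin

lemma fps_outer_nth_0: "fps_outer f $ 0 = 0"
  by (simp add: f0)

lemma compose_inner_mult: "compose_inner (G * H) f = compose_inner G f * compose_inner H f"
  by (rule fps_ext) (simp add: fps_mult_nth fps_compose_sum_distrib fps_compose_mult_distrib[OF f0])

lemma compose_inner_const: "compose_inner (fps_const g) f = fps_const (g oo f)"
  by (rule fps_ext) simp

lemma compose_inner_fps_outer: "compose_inner (fps_outer g) f = fps_outer g"
  by (rule fps_ext) simp

lemma bicompose_mult [simp]: "bicompose (G * H) f = bicompose G f * bicompose H f"
  by (simp add: bicompose_def compose_inner_mult fps_compose_mult_distrib[OF fps_outer_nth_0])

lemma bicompose_const [simp]: "bicompose (fps_const g) f = fps_const (g oo f)"
  by (simp add: bicompose_def compose_inner_const)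

lemma bicompose_fps_outer [simp]: "bicompose (fps_outer g) f = fps_outer (g oo f)"
  by (simp add: bicompose_def compose_inner_fps_outer fps_outer_compose)

lemma bicompose_nth_0: "bicompose G f $ 0 = G $ 0 oo f"
  by (simp add: bicompose_def)

lemma fps_deriv_bicompose:
  "fps_deriv (bicompose G f) = bicompose (fps_deriv G) f * fps_outer (fps_deriv f)"
proof -
  have "fps_deriv (compose_inner G f) = compose_inner (fps_deriv G) f"
    by (rule fps_ext) (simp add: fps_const_mult_apply_left flip: fps_of_nat)
  thus ?thesis
    by (simp add: bicompose_def fps_compose_deriv[OF fps_outer_nth_0] fps_deriv_fps_outer)
qed

lemma fps_deriv_inner_bicompose:
  "fps_deriv_inner (bicompose G f) = bicompose (fps_deriv_inner G) f * fps_const (fps_deriv f)"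
proof -
  have "fps_deriv_inner (A oo fps_outer f) = fps_deriv_inner A oo fps_outer f" for A
    by (rule fps_ext) (simp add: fps_compose_nth fps_deriv_sum flip: fps_outer_power)
  moreover have "fps_deriv_inner (compose_inner G f)
      = compose_inner (fps_deriv_inner G) f * fps_const (fps_deriv f)"
    by (rule fps_ext) (simp add: fps_compose_deriv[OF f0])
  ultimately show ?thesis
    by (simp add: bicompose_def fps_compose_mult_distrib[OF fps_outer_nth_0])
qed

end

section \<open>The Tate series \<open>s(t)\<close>\<close>

definition vanishes_below :: "nat \<Rightarrow> 'a::comm_ring_1 fps \<Rightarrow> bool" where
  "vanishes_below k f \<longleftrightarrow> (\<forall>i<k. f $ i = 0)"

lemma vanishes_below_0 [simp]: "vanishes_below 0 f"
  by (simp add: vanishes_below_def)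

lemma vanishes_below_add: "vanishes_below k f \<Longrightarrow> vanishes_below k g \<Longrightarrow> vanishes_below k (f + g)"
  by (simp add: vanishes_below_def)

lemma vanishes_below_mono: "vanishes_below k f \<Longrightarrow> l \<le> k \<Longrightarrow> vanishes_below l f"
  by (simp add: vanishes_below_def)

lemma vanishes_below_mult:
  assumes f: "vanishes_below k f" and g: "vanishes_below l g"
  shows "vanishes_below (k + l) (f * g)"
  unfolding vanishes_below_def fps_mult_nth
proof (intro allI impI sum.neutral ballI)
  fix i j assume "i < k + l" "j \<in> {0..i}"
  show "f $ j * g $ (i - j) = 0"
  proof (cases "j < k")
    case True thus ?thesis using f by (simp add: vanishes_below_def)
  next
    case False
    hence "i - j < l" using \<open>i < k + l\<close> \<open>j \<in> {0..i}\<close> by auto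
    thus ?thesis using g by (simp add: vanishes_below_def)
  qed
qed

lemma vanishes_below_all: "(\<And>k. vanishes_below k f) \<Longrightarrow> f = 0"
  by (auto simp: vanishes_below_def fps_eq_iff)

context
  fixes a1 a2 a3 a4 a6 :: "'a::comm_ring_1"
begin

definition tate_map :: "'a fps \<Rightarrow> 'a fps" where
  "tate_map s = fps_X ^ 3 + fps_const a1 * fps_X * s + fps_const a2 * fps_X ^ 2 * s
     + fps_const a3 * s ^ 2 + fps_const a4 * fps_X * s ^ 2 + fps_const a6 * s ^ 3"

lemma tate_map_nth_0: "s $ 0 = 0 \<Longrightarrow> tate_map s $ 0 = 0"
  by (simp add: tate_map_def fps_mult_nth power2_eq_square power3_eq_cube)

lemma tate_map_contracts:
  assumes "vanishes_below k (s - s')" and "s $ 0 = 0" and "s' $ 0 = 0"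
  shows "vanishes_below (Suc k) (tate_map s - tate_map s')"
proof -
  define g where "g = fps_const a1 * fps_X + fps_const a2 * fps_X * fps_X + fps_const a3 * (s + s')
     + fps_const a4 * fps_X * (s + s') + fps_const a6 * (s*s + s*s' + s'*s')"
  have "tate_map s - tate_map s' = (s - s') * g"
    by (simp add: tate_map_def g_def algebra_simps power2_eq_square power3_eq_cube)
  moreover have "vanishes_below 1 g"
    using assms(2,3) by (simp add: vanishes_below_def g_def fps_mult_nth)
  ultimately show ?thesis
    using vanishes_below_mult[OF assms(1), of 1 g] by simp
qed

abbreviation tate_iterate :: "nat \<Rightarrow> 'a fps" where
  "tate_iterate n \<equiv> (tate_map ^^ n) 0"

lemma tate_iterate_nth_0: "tate_iterate n $ 0 = 0"
  by (induction n) (simp_all add: tate_map_nth_0)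

lemma tate_iterate_Suc: "vanishes_below n (tate_iterate (Suc n) - tate_iterate n)"
proof (induction n)
  case (Suc n)
  show ?case using tate_map_contracts[OF Suc tate_iterate_nth_0 tate_iterate_nth_0] by simp
qed simp

lemma tate_iterate_stable: "vanishes_below n (tate_iterate (n + m) - tate_iterate n)"
proof (induction m)
  case (Suc m)
  have "tate_iterate (n + Suc m) - tate_iterate n
      = (tate_iterate (Suc (n + m)) - tate_iterate (n + m)) + (tate_iterate (n + m) - tate_iterate n)"
    by simp
  thus ?case
    using Suc vanishes_below_add vanishes_below_mono[OF tate_iterate_Suc] by (metis le_add1)
qed (simp add: vanishes_below_def)

lemma tate_iterate_nth: "i < n \<Longrightarrow> n \<le> m \<Longrightarrow> tate_iterate m $ i = tate_iterate n $ i"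
  using tate_iterate_stable[of n "m - n"] by (auto simp: vanishes_below_def)

lemma tate_map_fixpoint_ex1: "\<exists>!s. s $ 0 = 0 \<and> s = tate_map s"
proof (rule ex1I)
  define s where "s = Abs_fps (\<lambda>i. tate_iterate (Suc i) $ i)"
  have approx: "vanishes_below (Suc n) (s - tate_iterate (Suc n))" for n
    unfolding vanishes_below_def
  proof (intro allI impI)
    fix i assume "i < Suc n"
    hence "tate_iterate (Suc n) $ i = tate_iterate (Suc i) $ i" by (intro tate_iterate_nth) auto
    thus "(s - tate_iterate (Suc n)) $ i = 0" by (simp add: s_def)
  qed
  have s0: "s $ 0 = 0"
    using tate_iterate_nth_0[of 1] by (simp add: s_def del: funpow.simps)
  have "s = tate_map s"
  proof (rule fps_ext)
    fix n
    have "vanishes_below (Suc (Suc n)) (tate_map s - tate_iterate (Suc (Suc n)))"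
      using tate_map_contracts[OF approx s0 tate_iterate_nth_0] by simp
    hence "tate_map s $ n = tate_iterate (Suc (Suc n)) $ n" by (simp add: vanishes_below_def)
    also have "\<dots> = s $ n" by (simp add: s_def tate_iterate_nth del: funpow.simps)
    finally show "s $ n = tate_map s $ n" ..
  qed
  with s0 show "s $ 0 = 0 \<and> s = tate_map s" ..
  fix s' assume s': "s' $ 0 = 0 \<and> s' = tate_map s'"
  have "vanishes_below k (s' - s)" for k
  proof (induction k)
    case (Suc k)
    show ?case using tate_map_contracts[OF Suc] s' s0 \<open>s = tate_map s\<close> by simp
  qed simp
  thus "s' = s" using vanishes_below_all[of "s' - s"] by simp
qed

end

abbreviation kc :: "K \<Rightarrow> K fps" where "kc \<equiv> fps_const"
abbreviation cc :: "K \<Rightarrow> K fps fps" where "cc c \<equiv> fps_const (fps_const c)"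

abbreviation "Phi_K \<equiv> tate_Phi (kc m1) (kc m2) (kc m3) (kc m4) (kc m6)"
abbreviation "P_K \<equiv> tate_P (kc m1) (kc m2) (kc m3) (kc m4) (kc m6)"
abbreviation "Q_K \<equiv> tate_Q (kc m1) (kc m2) (kc m3) (kc m4) (kc m6)"

lemma tate_s_nth_0: "tate_s $ 0 = 0"
  and tate_s_fixpoint: "tate_map m1 m2 m3 m4 m6 tate_s = tate_s"
proof -
  have "tate_s $ 0 = 0 \<and> tate_s = tate_map m1 m2 m3 m4 m6 tate_s"
    unfolding tate_s_def using theI'[OF tate_map_fixpoint_ex1[unfolded tate_map_def]]
    by (simp add: tate_map_def)
  thus "tate_s $ 0 = 0" "tate_map m1 m2 m3 m4 m6 tate_s = tate_s" by simp_all
qed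

lemma tate_s_on_curve: "Phi_K fps_X tate_s = 0"
  using tate_s_fixpoint unfolding tate_Phi_def tate_map_def by (simp add: algebra_simps)

lemma tate_s_nth_1: "tate_s $ 1 = 0"
proof -
  have "tate_s $ 1 = tate_map m1 m2 m3 m4 m6 tate_s $ 1" using tate_s_fixpoint by simp
  also have "\<dots> = 0" using tate_s_nth_0
    by (simp add: tate_map_def fps_mult_nth power2_eq_square power3_eq_cube numeral_3_eq_3)
  finally show ?thesis .
qed

text \<open>The invariant differential of the curve is \<open>dt / P_s\<close>.\<close>

definition P_s :: "K fps" where "P_s = P_K fps_X tate_s"
definition Q_s :: "K fps" where "Q_s = Q_K fps_X tate_s"

lemma P_s_nth_0: "P_s $ 0 = 1"
  using tate_s_nth_0 by (simp add: P_s_def tate_P_def power2_eq_square)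

lemma fps_deriv_tate_s: "fps_deriv tate_s * P_s = Q_s"
proof -
  interpret tate_derivation fps_deriv "kc m1" "kc m2" "kc m3" "kc m4" "kc m6"
    by (intro tate_derivation.intro derivation_fps_deriv) (unfold_locales; simp)
  have "fps_deriv (Phi_K fps_X tate_s) = 0" by (simp only: tate_s_on_curve) simp
  thus ?thesis unfolding D_Phi P_s_def Q_s_def by (simp add: algebra_simps)
qed

section \<open>The invariant differential of \<open>F\<^sub>\<mu>\<close>\<close>

abbreviation "Phi_R \<equiv> tate_Phi (cc m1) (cc m2) (cc m3) (cc m4) (cc m6)"
abbreviation "P_R \<equiv> tate_P (cc m1) (cc m2) (cc m3) (cc m4) (cc m6)"

lemma chord_through_P1: "chord_lambda * T1 + chord_nu = fps_const tate_s"
  by (simp add: chord_nu_def)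

lemma chord_through_P2: "chord_lambda * T2 + chord_nu = fps_outer tate_s"
proof -
  have "chord_lambda * (T2 - T1) = fps_outer tate_s - fps_const tate_s"
  proof (rule fps_ext)
    fix j
    have shift: "chord_lambda $ k = fps_const (tate_s $ Suc k) + fps_X * chord_lambda $ Suc k" for k
      by (rule fps_ext) (auto simp: chord_lambda_def)
    have base: "fps_X * chord_lambda $ 0 = tate_s"
      by (rule fps_ext) (auto simp: chord_lambda_def tate_s_nth_0)
    show "(chord_lambda * (T2 - T1)) $ j = (fps_outer tate_s - fps_const tate_s) $ j"
    proof (cases j)
      case 0 thus ?thesis by (simp add: T1_def T2_def algebra_simps base tate_s_nth_0)
    next
      case (Suc k) thus ?thesis by (simp add: T1_def T2_def algebra_simps shift[of k])
    qed
  qed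
  thus ?thesis by (simp add: chord_nu_def algebra_simps)
qed

definition chord_deriv :: "K fps fps \<Rightarrow> K fps fps" where
  "chord_deriv G = fps_const P_s * fps_deriv_inner G - fps_outer P_s * fps_deriv G"

lemma derivation_chord_deriv: "derivation chord_deriv"
  unfolding chord_deriv_def[abs_def]
  by (intro derivation_diff_combination derivation_fps_deriv_inner derivation_fps_deriv)

lemma fps_fps_right_inverse:
  fixes G :: "'a::field fps fps"
  assumes "G $ 0 $ 0 \<noteq> 0"
  shows "G * inverse G = 1"
proof -
  have "G $ 0 * inverse (G $ 0) = 1" using assms by (rule inverse_mult_eq_1')
  thus ?thesis unfolding fps_inverse_def by (rule fps_right_inverse)
qed

lemma chord_lambda_nth_00 [simp]: "chord_lambda $ 0 $ 0 = 0"
  using tate_s_nth_1 by (simp add: chord_lambda_def)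

lemma chord_nu_nth_00 [simp]: "chord_nu $ 0 $ 0 = 0"
  by (simp add: chord_nu_def T1_def tate_s_nth_0)

lemma chord_c3_eq: "chord_c3 = line_c3 (cc m2) (cc m4) (cc m6) chord_lambda"
  by (simp add: chord_c3_def line_c3_def)

lemma chord_c2_eq: "chord_c2 = line_c2 (cc m1) (cc m2) (cc m3) (cc m4) (cc m6) chord_lambda chord_nu"
  by (simp add: chord_c2_def line_c2_def)

lemma chord_c3_nth_00 [simp]: "chord_c3 $ 0 $ 0 = 1"
  by (simp add: chord_c3_def fps_power_zeroth)

lemma chord_c3_right_inverse: "chord_c3 * inverse chord_c3 = 1"
  by (rule fps_fps_right_inverse) simp

lemma third_t_nth_00 [simp]: "third_t $ 0 $ 0 = 0"
  by (simp add: third_t_def chord_c2_def T1_def T2_def fps_power_zeroth)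

lemma third_s_nth_00 [simp]: "third_s $ 0 $ 0 = 0"
  by (simp add: third_s_def)

lemma T1_neq_T2: "T1 \<noteq> T2"
proof
  assume "T1 = T2"
  hence "T1 $ 0 $ 1 = T2 $ 0 $ 1" by simp
  thus False by (simp add: T1_def T2_def)
qed

lemma P_R_chord:
  "P_R T1 (chord_lambda * T1 + chord_nu) = fps_const P_s"
  "P_R T2 (chord_lambda * T2 + chord_nu) = fps_outer P_s"
  unfolding chord_through_P1 chord_through_P2
  by (simp_all add: P_s_def tate_P_def T1_def T2_def fps_numeral_fps_const one_minus_fps_const)

lemma Phi_R_chord:
  "Phi_R T1 (chord_lambda * T1 + chord_nu) = 0"
  "Phi_R T2 (chord_lambda * T2 + chord_nu) = 0"
proof -
  have "Phi_R T1 (fps_const tate_s) = 0"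
    using tate_s_on_curve unfolding tate_Phi_def T1_def by simp
  thus "Phi_R T1 (chord_lambda * T1 + chord_nu) = 0"
    by (simp only: chord_through_P1)
  have "Phi_R T2 (fps_outer tate_s) = 0"
    using arg_cong[OF tate_s_on_curve, of fps_outer] unfolding tate_Phi_def T2_def by simp
  thus "Phi_R T2 (chord_lambda * T2 + chord_nu) = 0"
    by (simp only: chord_through_P2)
qed

interpretation chord:
  tate_chord chord_deriv "cc m1" "cc m2" "cc m3" "cc m4" "cc m6" T1 T2 chord_lambda chord_nu
proof (intro tate_chord.intro tate_derivation.intro tate_chord_axioms.intro
    tate_derivation_axioms.intro derivation_chord_deriv Phi_R_chord T1_neq_T2)
  show "chord_deriv T1 = P_R T1 (chord_lambda * T1 + chord_nu)"
    unfolding P_R_chord by (simp add: chord_deriv_def T1_def)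
  show "chord_deriv T2 = - P_R T2 (chord_lambda * T2 + chord_nu)"
    unfolding P_R_chord by (simp add: chord_deriv_def T2_def)
  show "P_R T1 (chord_lambda * T1 + chord_nu) \<noteq> 0" "P_R T2 (chord_lambda * T2 + chord_nu) \<noteq> 0"
    unfolding P_R_chord using P_s_nth_0 by (auto dest: arg_cong[where f = "\<lambda>G. G $ 0 $ 0"])
qed (simp_all add: chord_deriv_def)

lemma chord_deriv_third_point: "chord_deriv third_t = 0" "chord_deriv third_s = 0"
  using chord.D_third_point[OF chord_c3_right_inverse[unfolded chord_c3_eq]]
  by (simp_all add: third_t_def third_s_def chord_c3_eq chord_c2_eq)

lemma chord_deriv_elliptic_fgl: "chord_deriv elliptic_fgl = 0"
proof -
  define d where "d = cc m1 * third_t + cc m3 * third_s - 1"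
  have "d * inverse d = 1" by (rule fps_fps_right_inverse) (simp add: d_def fps_power_zeroth)
  moreover have "chord_deriv d = 0" by (simp add: d_def chord_deriv_third_point)
  ultimately have "chord_deriv (inverse d) = 0" by (rule chord.right_inverse_const[rotated])
  thus ?thesis by (simp add: elliptic_fgl_def d_def[symmetric] chord_deriv_third_point)
qed

lemma elliptic_fgl_nth_0: "elliptic_fgl $ 0 = fps_X"
proof -
  define l where "l = chord_lambda $ 0"
  have l_X: "l * fps_X = tate_s"
    unfolding l_def by (rule fps_ext) (auto simp: chord_lambda_def tate_s_nth_0)
  have nu: "chord_nu $ 0 = 0"
    using l_X by (simp add: chord_nu_def l_def T1_def mult.commute)
  define d where "d = cc m1 * third_t + cc m3 * third_s - 1"
  have "elliptic_fgl $ 0 = third_t $ 0 * inverse (d $ 0)"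
    by (simp add: elliptic_fgl_def d_def)
  also have "\<dots> = fps_X"
  proof (rule tate_chord_through_origin)
    show "Phi_K fps_X (l * fps_X) = 0" using tate_s_on_curve l_X by simp
    have c3: "chord_c3 $ 0 = line_c3 (kc m2) (kc m4) (kc m6) l"
      by (simp add: chord_c3_def l_def line_c3_def fps_power_zeroth)
    show "line_c3 (kc m2) (kc m4) (kc m6) l * inverse (chord_c3 $ 0) = 1"
      unfolding c3[symmetric] by (rule inverse_mult_eq_1') simp
  qed (simp_all add: third_t_def third_s_def d_def chord_c2_def line_c2_def T1_def T2_def l_def nu
      inverse_mult_eq_1' fps_power_zeroth)
  finally show ?thesis .
qed

lemma elliptic_fgl_invariant:
  "fps_const P_s * fps_deriv_inner elliptic_fgl = fps_outer P_s * fps_deriv elliptic_fgl"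
  using chord_deriv_elliptic_fgl by (simp add: chord_deriv_def)

lemma elliptic_fgl_nth_1: "elliptic_fgl $ 1 = P_s"
proof -
  have "(fps_const P_s * fps_deriv_inner elliptic_fgl) $ 0 = (fps_outer P_s * fps_deriv elliptic_fgl) $ 0"
    using elliptic_fgl_invariant by simp
  thus ?thesis by (simp add: elliptic_fgl_nth_0 P_s_nth_0)
qed

lemma bisubst_eq_bicompose: "f $ 0 = 0 \<Longrightarrow> bisubst G f f = bicompose G f"
proof (intro fps_ext)
  fix i j
  assume f0: "f $ 0 = 0"
  have "bicompose G f $ j $ i = (\<Sum>b=0..j. (G $ b oo f) $ i * (f ^ b) $ j)"
    by (simp add: bicompose_def fps_compose_nth fps_sum_nth flip: fps_outer_power)
  also have "\<dots> = (\<Sum>b=0..j. \<Sum>a=0..i. G $ b $ a * (f ^ a) $ i * (f ^ b) $ j)"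
    by (simp add: fps_compose_nth sum_distrib_right)
  also have "\<dots> = bisubst G f f $ j $ i"
    by (subst sum.swap) (simp add: bisubst_def atLeast0AtMost)
  finally show "bisubst G f f $ j $ i = bicompose G f $ j $ i" ..
qed

lemma binomial_shift_identity: "(j + 1) * ((i + j + 1) choose i) = (i + 1) * ((i + j + 1) choose (i + 1))"
proof -
  have "Suc j * (Suc (i + j) choose Suc j) = Suc i * (Suc (i + j) choose Suc i)"
    using Suc_times_binomial[of j "i + j"] Suc_times_binomial[of i "i + j"]
      binomial_symmetric[of i "i + j"] by simp
  thus ?thesis using binomial_symmetric[of i "Suc (i + j)"] by simp
qed

lemma eq_add_subst_if_fps_deriv_inner_eq:
  fixes H :: "K fps fps"
  assumes deriv_eq: "fps_deriv_inner H = fps_deriv H" and H0: "H $ 0 = f"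
  shows "H = add_subst f"
proof -
  have "\<forall>i. H $ j $ i = of_nat ((i + j) choose i) * f $ (i + j)" for j
  proof (induction j)
    case (Suc j)
    show ?case
    proof
      fix i
      have "fps_deriv_inner H $ j $ i = fps_deriv H $ j $ i" using deriv_eq by simp
      hence "of_nat (i + 1) * H $ j $ (i + 1) = of_nat (j + 1) * H $ (j + 1) $ i"
        by (simp del: of_nat_Suc of_nat_add)
      hence "of_nat (j + 1) * H $ Suc j $ i
          = of_nat (i + 1) * (of_nat ((i + 1 + j) choose (i + 1)) * f $ (i + 1 + j))"
        using Suc[rule_format, of "i + 1"] by simp
      also have "\<dots> = of_nat ((i + 1) * ((i + j + 1) choose (i + 1))) * f $ (i + j + 1)"
        by (simp add: algebra_simps)
      also have "\<dots> = of_nat (j + 1) * (of_nat ((i + j + 1) choose i) * f $ (i + j + 1))"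
        by (simp only: binomial_shift_identity[symmetric]) (simp add: algebra_simps)
      finally have "H $ Suc j $ i = of_nat ((i + j + 1) choose i) * f $ (i + j + 1)"
        by (simp del: of_nat_Suc)
      thus "H $ Suc j $ i = of_nat ((i + Suc j) choose i) * f $ (i + Suc j)" by simp
    qed
  qed (simp add: H0)
  thus ?thesis by (intro fps_ext) (simp add: add_subst_def)
qed

section \<open>The exponential\<close>

definition elliptic_log :: "K fps" where
  "elliptic_log = fps_integral0 (inverse P_s)"

lemma elliptic_log_nth_0: "elliptic_log $ 0 = 0"
  and elliptic_log_nth_1: "elliptic_log $ 1 = 1"
  by (simp_all add: elliptic_log_def P_s_nth_0 fps_integral_def)

lemma fps_deriv_elliptic_log: "fps_deriv elliptic_log = inverse P_s"
  by (simp add: elliptic_log_def fps_deriv_fps_integral)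

text \<open>Pulling the invariance identity back along \<open>f\<close> turns it into \<open>\<partial>\<^sub>1 = \<partial>\<^sub>2\<close>.\<close>

lemma exp_equation_if_fps_deriv:
  assumes f0: "f $ 0 = 0" and f_deriv: "fps_deriv f = P_s oo f"
  shows "add_subst f = bisubst elliptic_fgl f f"
proof -
  define H where "H = bicompose elliptic_fgl f"
  have "fps_deriv_inner H = bicompose (fps_const P_s * fps_deriv_inner elliptic_fgl) f"
    by (simp add: H_def fps_deriv_inner_bicompose[OF f0] bicompose_mult[OF f0]
        bicompose_const[OF f0] f_deriv mult.commute)
  also have "\<dots> = bicompose (fps_outer P_s * fps_deriv elliptic_fgl) f"
    by (simp only: elliptic_fgl_invariant)
  also have "\<dots> = fps_deriv H"
    by (simp add: H_def fps_deriv_bicompose[OF f0] bicompose_mult[OF f0]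
        bicompose_fps_outer[OF f0] f_deriv mult.commute)
  finally have "fps_deriv_inner H = fps_deriv H" .
  moreover have "H $ 0 = f"
    by (simp add: H_def bicompose_nth_0[OF f0] elliptic_fgl_nth_0 f0)
  ultimately have "H = add_subst f" by (rule eq_add_subst_if_fps_deriv_inner_eq)
  thus ?thesis by (simp add: H_def bisubst_eq_bicompose[OF f0])
qed

lemma fps_deriv_fps_inv_elliptic_log: "fps_deriv (fps_inv elliptic_log) = P_s oo fps_inv elliptic_log"
proof -
  have inv0: "fps_inv elliptic_log $ 0 = 0" by (simp add: fps_inv_def)
  have "fps_deriv (fps_inv elliptic_log) = inverse (fps_deriv elliptic_log oo fps_inv elliptic_log)"
    by (rule fps_inv_deriv) (simp_all add: elliptic_log_nth_0 elliptic_log_nth_1[simplified])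
  also have "\<dots> = P_s oo fps_inv elliptic_log"
    by (simp add: fps_deriv_elliptic_log fps_inverse_compose[OF inv0] P_s_nth_0)
  finally show ?thesis .
qed

lemma exp_equation_unique:
  assumes f0: "f $ 0 = 0" and f1: "f $ 1 = 1" and eq: "add_subst f = bisubst elliptic_fgl f f"
  shows "f = fps_inv elliptic_log"
proof -
  \<comment> \<open>differentiate in \<open>v\<close> at \<open>v = 0\<close>, using \<open>F(t, v) = t + P_s(t) v + O(v\<^sup>2)\<close>\<close>
  have "fps_deriv (add_subst f) $ 0 = fps_deriv (bicompose elliptic_fgl f) $ 0"
    using eq bisubst_eq_bicompose[OF f0] by simp
  hence f_deriv: "fps_deriv f = P_s oo f"
    unfolding fps_deriv_bicompose[OF f0] using f1
    by (simp add: add_subst_def bicompose_nth_0[OF f0] elliptic_fgl_nth_1[simplified] fps_eq_iff)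
  have "fps_deriv (elliptic_log oo f) = (inverse P_s * P_s) oo f"
    by (simp add: fps_compose_deriv[OF f0] fps_deriv_elliptic_log f_deriv
        fps_compose_mult_distrib[OF f0])
  also have "inverse P_s * P_s = 1" by (rule inverse_mult_eq_1) (simp add: P_s_nth_0)
  finally have "fps_deriv (elliptic_log oo f) = fps_deriv fps_X" by simp
  hence log_f: "elliptic_log oo f = fps_X"
    unfolding fps_deriv_eq_iff by (simp add: elliptic_log_nth_0)
  have "fps_inv elliptic_log oo elliptic_log = fps_X"
    by (rule fps_inv) (simp_all add: elliptic_log_nth_0 elliptic_log_nth_1[simplified])
  hence "f = (fps_inv elliptic_log oo elliptic_log) oo f"
    by (simp add: f0)
  also have "\<dots> = fps_inv elliptic_log"
    by (simp add: fps_compose_assoc[OF f0 elliptic_log_nth_0, symmetric] log_f)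
  finally show ?thesis .
qed

lemma elliptic_exp_eq_fps_inv: "elliptic_exp = fps_inv elliptic_log"
proof -
  have inv0: "fps_inv elliptic_log $ 0 = 0" by (simp add: fps_inv_def)
  have "fps_deriv (fps_inv elliptic_log) $ 0 = (P_s oo fps_inv elliptic_log) $ 0"
    by (simp only: fps_deriv_fps_inv_elliptic_log)
  hence inv1: "fps_inv elliptic_log $ 1 = 1" by (simp add: P_s_nth_0)
  have "\<exists>!f. f $ 0 = 0 \<and> f $ 1 = 1 \<and> add_subst f = bisubst elliptic_fgl f f"
    using inv0 inv1 exp_equation_if_fps_deriv[OF inv0 fps_deriv_fps_inv_elliptic_log]
      exp_equation_unique by blast
  from theI'[OF this] show ?thesis
    unfolding elliptic_exp_def using exp_equation_unique by blast
qed

lemma elliptic_exp_nth_0: "elliptic_exp $ 0 = 0"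
  by (simp add: elliptic_exp_eq_fps_inv fps_inv_def)

lemma fps_deriv_elliptic_exp: "fps_deriv elliptic_exp = P_s oo elliptic_exp"
  by (simp add: elliptic_exp_eq_fps_inv fps_deriv_fps_inv_elliptic_log)

lemma fps_deriv_elliptic_exp_system:
  "fps_deriv elliptic_exp = P_K elliptic_exp (tate_s oo elliptic_exp)"
  "fps_deriv (tate_s oo elliptic_exp) = Q_K elliptic_exp (tate_s oo elliptic_exp)"
proof -
  note f0 = elliptic_exp_nth_0
  show "fps_deriv elliptic_exp = P_K elliptic_exp (tate_s oo elliptic_exp)"
    by (simp add: fps_deriv_elliptic_exp P_s_def tate_P_compose[OF f0] f0)
  have "fps_deriv (tate_s oo elliptic_exp) = (fps_deriv tate_s * P_s) oo elliptic_exp"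
    by (simp add: fps_compose_deriv[OF f0] fps_deriv_elliptic_exp fps_compose_mult_distrib[OF f0])
  also have "\<dots> = Q_K elliptic_exp (tate_s oo elliptic_exp)"
    by (simp add: fps_deriv_tate_s Q_s_def tate_Q_compose[OF f0] f0)
  finally show "fps_deriv (tate_s oo elliptic_exp) = Q_K elliptic_exp (tate_s oo elliptic_exp)" .
qed

section \<open>Hurwitz integrality\<close>

definition in_E :: "K \<Rightarrow> bool" where
  "in_E x \<longleftrightarrow> (\<exists>e. x = Fract e 1)"

lemma in_E_Fract: "in_E (Fract e 1)"
  by (auto simp: in_E_def)

lemma in_E_0: "in_E 0"
  by (auto simp: in_E_def Zero_fract_def)

lemma in_E_1: "in_E 1"
  by (auto simp: in_E_def One_fract_def)

lemma in_E_add: "in_E x \<Longrightarrow> in_E y \<Longrightarrow> in_E (x + y)"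
  by (auto simp: in_E_def)

lemma in_E_diff: "in_E x \<Longrightarrow> in_E y \<Longrightarrow> in_E (x - y)"
  by (auto simp: in_E_def)

lemma in_E_mult: "in_E x \<Longrightarrow> in_E y \<Longrightarrow> in_E (x * y)"
  by (auto simp: in_E_def)

lemma in_E_of_nat: "in_E (of_nat n)"
  by (auto simp: in_E_def of_nat_fract)

lemma in_E_sum: "(\<And>i. i \<in> S \<Longrightarrow> in_E (f i)) \<Longrightarrow> in_E (sum f S)"
  by (induction S rule: infinite_finite_induct) (auto intro: in_E_add in_E_0)

definition hurwitz_upto :: "nat \<Rightarrow> K fps \<Rightarrow> bool" where
  "hurwitz_upto n h \<longleftrightarrow> (\<forall>k\<le>n. in_E (h $ k * fact k))"

lemma hurwitz_upto_const: "in_E c \<Longrightarrow> hurwitz_upto n (fps_const c)"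
  by (auto simp: hurwitz_upto_def intro: in_E_0)

lemma hurwitz_upto_one: "hurwitz_upto n 1"
  using hurwitz_upto_const[OF in_E_1] by simp

lemma hurwitz_upto_numeral: "hurwitz_upto n (numeral k)"
  using hurwitz_upto_const[OF in_E_of_nat[of "numeral k"]] by (simp add: fps_numeral_fps_const)

lemma hurwitz_upto_add: "hurwitz_upto n f \<Longrightarrow> hurwitz_upto n g \<Longrightarrow> hurwitz_upto n (f + g)"
  by (auto simp: hurwitz_upto_def distrib_right intro: in_E_add)

lemma hurwitz_upto_diff: "hurwitz_upto n f \<Longrightarrow> hurwitz_upto n g \<Longrightarrow> hurwitz_upto n (f - g)"
  by (auto simp: hurwitz_upto_def left_diff_distrib intro: in_E_diff)

text \<open>Leibniz: \<open>k! (f g)\<^sub>k = \<Sum> (k choose i) (i! f\<^sub>i) ((k-i)! g\<^sub>k\<^sub>-\<^sub>i)\<close>.\<close>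

lemma hurwitz_upto_mult:
  assumes f: "hurwitz_upto n f" and g: "hurwitz_upto n g"
  shows "hurwitz_upto n (f * g)"
  unfolding hurwitz_upto_def
proof (intro allI impI)
  fix k assume k: "k \<le> n"
  have "(f * g) $ k * fact k =
    (\<Sum>i=0..k. of_nat (k choose i) * (f $ i * fact i) * (g $ (k - i) * fact (k - i)))"
    unfolding fps_mult_nth sum_distrib_right
  proof (rule sum.cong[OF refl])
    fix i assume "i \<in> {0..k}"
    hence "fact k = fact i * fact (k - i) * (k choose i)"
      using binomial_fact_lemma[of i k] by simp
    hence "(fact k :: K) = fact i * fact (k - i) * of_nat (k choose i)"
      by (metis of_nat_fact of_nat_mult)
    thus "f $ i * g $ (k - i) * fact k =
      of_nat (k choose i) * (f $ i * fact i) * (g $ (k - i) * fact (k - i))"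
      by (simp add: algebra_simps)
  qed
  also have "in_E \<dots>"
  proof (rule in_E_sum)
    fix i assume "i \<in> {0..k}"
    with f g k have "in_E (f $ i * fact i)" "in_E (g $ (k - i) * fact (k - i))"
      by (simp_all add: hurwitz_upto_def)
    thus "in_E (of_nat (k choose i) * (f $ i * fact i) * (g $ (k - i) * fact (k - i)))"
      by (rule in_E_mult[OF in_E_mult[OF in_E_of_nat]])
  qed
  finally show "in_E ((f * g) $ k * fact k)" .
qed

lemma hurwitz_upto_power: "hurwitz_upto n f \<Longrightarrow> hurwitz_upto n (f ^ k)"
  by (induction k) (simp_all add: hurwitz_upto_one hurwitz_upto_mult)

lemma hurwitz_upto_Suc_if_deriv:
  assumes "hurwitz_upto n h" and "hurwitz_upto n (fps_deriv h)"
  shows "hurwitz_upto (Suc n) h"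
  unfolding hurwitz_upto_def
proof (intro allI impI)
  fix k assume "k \<le> Suc n"
  then consider "k \<le> n" | "k = Suc n" by linarith
  thus "in_E (h $ k * fact k)"
  proof cases
    case 2
    from assms(2) have "in_E (fps_deriv h $ n * fact n)"
      unfolding hurwitz_upto_def by blast
    also have "fps_deriv h $ n * fact n = h $ k * fact k"
      using 2 by (simp add: algebra_simps)
    finally show ?thesis .
  qed (use assms(1) in \<open>simp add: hurwitz_upto_def\<close>)
qed

lemma hurwitz_upto_tate_P:
  "hurwitz_upto n x \<Longrightarrow> hurwitz_upto n y \<Longrightarrow> hurwitz_upto n (P_K x y)"
  unfolding tate_P_def
  by (intro hurwitz_upto_diff hurwitz_upto_add hurwitz_upto_mult hurwitz_upto_power
      hurwitz_upto_one hurwitz_upto_numeral hurwitz_upto_const in_E_Fract)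

lemma hurwitz_upto_tate_Q:
  "hurwitz_upto n x \<Longrightarrow> hurwitz_upto n y \<Longrightarrow> hurwitz_upto n (Q_K x y)"
  unfolding tate_Q_def
  by (intro hurwitz_upto_add hurwitz_upto_mult hurwitz_upto_power
      hurwitz_upto_numeral hurwitz_upto_const in_E_Fract)

lemma hurwitz_upto_elliptic_exp:
  "hurwitz_upto n elliptic_exp \<and> hurwitz_upto n (tate_s oo elliptic_exp)"
proof (induction n)
  case 0
  show ?case by (simp add: hurwitz_upto_def elliptic_exp_nth_0 tate_s_nth_0 in_E_0)
next
  case (Suc n)
  thus ?case
    using hurwitz_upto_Suc_if_deriv hurwitz_upto_tate_P hurwitz_upto_tate_Q
      fps_deriv_elliptic_exp_system by metis
qed

theorem mainTheorem5:
  shows "hurwitz_over_E elliptic_exp"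
  unfolding hurwitz_over_E_def
proof
  fix k
  obtain phi where "elliptic_exp $ k * fact k = Fract phi 1"
    using hurwitz_upto_elliptic_exp[of k] by (auto simp: hurwitz_upto_def in_E_def)
  hence "elliptic_exp $ k = Fract phi 1 / of_nat (fact k)"
    by (simp add: field_simps)
  thus "\<exists>phi :: E. elliptic_exp $ k = Fract phi 1 / of_nat (fact k)" ..
qed

end
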